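(* For the renormalized $\phi^4$-trajectory (the unique solution of system (S) with properties (I)–(VII), for any choice of the sequence $(\lambda^{(r)})_{r\ge2}$), the second-order six-point vertex is $$\widetilde V^{(2)}_6(p_1,\ldots,p_5)=-20\left[\frac{1-e^{-(p_1+p_2+p_3)^2}}{(p_1+p_2+p_3)^2}\right]_{S_5},$$ so that $\widetilde V_6^{(2)}(0,0,0,q,-q)=-8-12\,\frac{1-e^{-q^2}}{q^2}$, and the second-order coefficient of the $\beta$-function is $\beta^{(2)}=-\frac{6}{(4\pi)^2}$.
   Context: Here $[F]_{S_5}$ is the average of $F$ over all permutations of $p_1,\ldots,p_5\in\mathbb R^4$, and $\frac{1-e^{-x}}{x}$ is understood as $1$ at $x=0$. Notation: $\widetilde C(q)=e^{-q^2}$; $\int\frac{d^4q}{(2\pi)^4}$ is Lebesgue measure on $\mathbb R^4$ divided by $(2\pi)^4$; vertices $\widetilde V^{(r)}_{2n}$ are functions of $p_1,\ldots,p_{2n-1}\in\mathbb R^4$, with $p_{2n}=-\sum_{i<2n}p_i$; $[\cdot]_{S_{k}}$ denotes averaging over permutations of $p_1,\ldots,p_k$; $\lambda^{(1)}=1$. System (S): for all $r,n\ge1$, $\{\sum_{i=1}^{2n-1}p_i\cdot\nabla_{p_i}-4+2n+r\beta^{(1)}\}\widetilde V^{(r)}_{2n}(p_1,\ldots,p_{2n-1})=-\sum_{s=2}^r\binom rs\beta^{(s)}\widetilde V^{(r-s+1)}_{2n}(p_1,\ldots,p_{2n-1})+\int\frac{d^4q}{(2\pi)^4}\widetilde C(q)\widetilde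 V^{(r)}_{2(n+1)}(p_1,\ldots,p_{2n-1},q,-q)-\sum_{s=1}^{r-1}\binom rs\sum_{m=1}^n\binom{2n}{2m-1}\big[\widetilde C(\sum_{i=1}^{2m-1}p_i)\widetilde V^{(s)}_{2m}(p_1,\ldots,p_{2m-1})\widetilde V^{(r-s)}_{2(n-m+1)}(p_{2m},\ldots,p_{2n-1},\sum_{i=1}^{2m-1}p_i)\big]_{S_{2n-1}}$. Properties: (I) symmetry under permutations of $(p_1,\ldots,p_{2n})$; (II) $O(4)$-invariance; (III) $C^\infty$; (IV) for all $0<\epsilon<1/2$ and multi-indices $\alpha$, $\sup_p|\partial^\alpha\widetilde V^{(r)}_{2n}(p)|e^{-\epsilon\sum_{i=1}^{2n-1}p_i^2}<\infty$; (V) $\widetilde V^{(r)}_{2n}\equiv0$ for $n>r+1$; (VI) $\widetilde V^{(r)}_4(0,0,0)=\lambda^{(r)}$ for $r>1$; (VII) $\widetilde V^{(1)}_2(p)=\mu^{(1)}+\zeta^{(1)}p^2$ for some reals $\mu^{(1)},\zeta^{(1)}$, $\widetilde V^{(1)}_4\equiv1$, $\widetilde V^{(1)}_{2n}\equiv0$ for $n>2$. *)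

theory Defs
  imports "HOL-Analysis.Analysis" "HOL-Combinatorics.Permutations"
begin

text \<open>Momenta are elements of real^4.  A vertex function of p_1,...,p_(k) is represented
  as a function (nat => real^4) => real that only depends on the entries 0..k-1
  (entry i-1 stores p_i).  The vertex V^(r)_(2n) is represented by V r n.\<close>

type_synonym mom = "real^4"
type_synonym vfun = "(nat \<Rightarrow> mom) \<Rightarrow> real"

definition depends_only :: "nat \<Rightarrow> vfun \<Rightarrow> bool" where
  "depends_only k f \<longleftrightarrow> (\<forall>p q. (\<forall>i<k. p i = q i) \<longrightarrow> f p = f q)"

definition pd :: "vfun \<Rightarrow> nat \<Rightarrow> 4 \<Rightarrow> vfun" where
  "pd f i j p = deriv (\<lambda>t. f (p(i := p i + t *\<^sub>R axis j 1))) 0"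

fun pdl :: "(nat \<times> 4) list \<Rightarrow> vfun \<Rightarrow> vfun" where
  "pdl [] f = f"
| "pdl ((i, j) # ds) f = pd (pdl ds f) i j"

definition dirs_below :: "nat \<Rightarrow> (nat \<times> 4) list \<Rightarrow> bool" where
  "dirs_below k ds \<longleftrightarrow> (\<forall>d\<in>set ds. fst d < k)"

definition smooth_in :: "nat \<Rightarrow> vfun \<Rightarrow> bool" where
  "smooth_in k f \<longleftrightarrow>
     (\<forall>ds. dirs_below k ds \<longrightarrow>
        continuous_on {p. \<forall>i\<ge>k. p i = 0} (pdl ds f) \<and>
        (\<forall>i j p. i < k \<longrightarrow> (\<lambda>t. pdl ds f (p(i := p i + t *\<^sub>R axis j 1))) differentiable (at 0)))"

definition euler :: "nat \<Rightarrow> vfun \<Rightarrow> vfun" where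
  "euler k f p = (\<Sum>i<k. \<Sum>j\<in>(UNIV::4 set). (p i $ j) * pd f i j p)"

definition avg :: "nat \<Rightarrow> vfun \<Rightarrow> vfun" where
  "avg k F p = (\<Sum>\<sigma>\<in>{\<sigma>. \<sigma> permutes {..<k}}. F (p \<circ> \<sigma>)) / fact k"

definition Cov :: "mom \<Rightarrow> real" where
  "Cov q = exp (- (q \<bullet> q))"

definition g :: "mom \<Rightarrow> real" where
  "g q = (if q \<bullet> q = 0 then 1 else (1 - exp (- (q \<bullet> q))) / (q \<bullet> q))"

definition ext_mom :: "nat \<Rightarrow> (nat \<Rightarrow> mom) \<Rightarrow> (nat \<Rightarrow> mom)" where
  "ext_mom n p = (\<lambda>i. if i < 2*n - 1 then p i
                       else if i = 2*n - 1 then - (\<Sum>l<2*n - 1. p l) else 0)"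

definition flow_rhs :: "(nat \<Rightarrow> nat \<Rightarrow> vfun) \<Rightarrow> (nat \<Rightarrow> real) \<Rightarrow> nat \<Rightarrow> nat \<Rightarrow> vfun" where
  "flow_rhs V beta r n p =
     - (\<Sum>s=2..r. real (r choose s) * beta s * V (r - s + 1) n p)
     + (integral\<^sup>L lborel (\<lambda>q::mom. Cov q *
          V r (n+1) (\<lambda>i. if i < 2*n - 1 then p i else if i = 2*n - 1 then q
                         else if i = 2*n then - q else 0))) / (2*pi)^4
     - (\<Sum>s=1..r-1. real (r choose s) * (\<Sum>m=1..n. real ((2*n) choose (2*m - 1)) *
          avg (2*n - 1) (\<lambda>p. Cov (\<Sum>i<2*m - 1. p i) * V s m p *
              V (r - s) (n - m + 1) (\<lambda>i. if i < 2*n - 2*m then p (2*m - 1 + i)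
                                     else if i = 2*n - 2*m then (\<Sum>l<2*m - 1. p l) else 0)) p))"

definition system_S :: "(nat \<Rightarrow> nat \<Rightarrow> vfun) \<Rightarrow> (nat \<Rightarrow> real) \<Rightarrow> bool" where
  "system_S V beta \<longleftrightarrow>
    (\<forall>r n p. r \<ge> 1 \<longrightarrow> n \<ge> 1 \<longrightarrow>
       euler (2*n - 1) (V r n) p + (- 4 + 2 * real n + real r * beta 1) * V r n p
       = flow_rhs V beta r n p)"

definition props_I_VII :: "(nat \<Rightarrow> nat \<Rightarrow> vfun) \<Rightarrow> (nat \<Rightarrow> real) \<Rightarrow> bool" where
  "props_I_VII V lam \<longleftrightarrow>
    (\<forall>r n. r \<ge> 1 \<longrightarrow> n \<ge> 1 \<longrightarrow>
       depends_only (2*n - 1) (V r n)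
     \<and> (\<forall>\<sigma> p. \<sigma> permutes {..<2*n} \<longrightarrow> V r n (ext_mom n p \<circ> \<sigma>) = V r n p)
     \<and> (\<forall>R p. orthogonal_transformation R \<longrightarrow> V r n (\<lambda>i. R (p i)) = V r n p)
     \<and> smooth_in (2*n - 1) (V r n)
     \<and> (\<forall>\<epsilon> ds. 0 < \<epsilon> \<longrightarrow> \<epsilon> < 1/2 \<longrightarrow> dirs_below (2*n - 1) ds \<longrightarrow>
          (\<exists>M. \<forall>p. \<bar>pdl ds (V r n) p\<bar> * exp (- \<epsilon> * (\<Sum>i<2*n - 1. p i \<bullet> p i)) \<le> M))
     \<and> (n > r + 1 \<longrightarrow> (\<forall>p. V r n p = 0)))
   \<and> (\<forall>r. r > 1 \<longrightarrow> V r 2 (\<lambda>_. 0) = lam r)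
   \<and> (\<exists>mu zeta. \<forall>p. V 1 1 p = mu + zeta * (p 0 \<bullet> p 0))
   \<and> (\<forall>p. V 1 2 p = 1)
   \<and> (\<forall>n p. n > 2 \<longrightarrow> V 1 n p = 0)"

end

theory Submission
  imports Defs "HOL-Probability.Probability"
begin

(*
  The first-order vertices are explicit, so the equations of (S) with r = 1 at n = 2 and at
  n = 1 give beta^(1) = 0 and mu^(1) = -1/(32 pi^2), using int C = pi^2.  For r = 2, n = 3
  only the tree made of two four-point vertices survives on the right-hand side, so
  V = V^(2)_6 solves (E + 2) V = -40 [C(p_1 + p_2 + p_3)] with E the Euler operator.
  Along a ray, d/dt (t^2 V(tp)) = t ((E + 2) V)(tp), and t^2 g(tP) is an antiderivative of
  2t C(tP); as t^2 V(tp) vanishes at t = 0, this determines V.  Evaluating V at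
  (0,0,0,q,-q) and inserting it into the equation for r = n = 2 at zero momenta gives
  beta^(2), where int C g = pi^2/2 follows from C(q) g(q) = int_0^1 exp(-(1+s) q^2) ds.
*)

section \<open>Radial derivatives of smooth vertex functions\<close>

definition coord_path :: "(nat \<Rightarrow> mom) \<Rightarrow> (nat \<Rightarrow> mom) \<Rightarrow> (nat \<times> 4) set \<Rightarrow> real \<Rightarrow> nat \<Rightarrow> mom" where
  "coord_path q v A x = (\<lambda>i. q i + (\<chi> j. if (i, j) \<in> A then x * v i $ j else 0))"

lemma coord_path_empty [simp]: "coord_path q v {} x = q"
  by (auto simp: coord_path_def fun_eq_iff vec_eq_iff)

lemma coord_path_insert:
  "a \<notin> A \<Longrightarrow> coord_path q v (insert a A) x = coord_path (coord_path q v {a} x) v A x"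
  by (auto simp: coord_path_def fun_eq_iff vec_eq_iff)

lemma coord_path_singleton:
  "coord_path q v {(i, j)} y = q(i := q i + (y * v i $ j) *\<^sub>R axis j 1)"
  by (auto simp: coord_path_def fun_eq_iff vec_eq_iff axis_def)

lemma coord_path_commute:
  "coord_path (coord_path q v B y) v A x = coord_path (coord_path q v A x) v B y"
  by (auto simp: coord_path_def fun_eq_iff vec_eq_iff algebra_simps)

lemma continuous_on_coord_path:
  "continuous_on UNIV (\<lambda>(x, y). coord_path (coord_path q v B y) v A x)"
proof -
  have if_zero: "continuous_on S h \<Longrightarrow> continuous_on S (\<lambda>x. if P then h x else (0::real))"
    for S P h by (cases P) auto
  show ?thesis
    unfolding coord_path_def
    by (intro continuous_on_coordinatewise_then_product)
       (auto intro!: continuous_intros if_zero simp: split_beta')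
qed

lemma has_real_derivative_coordinate_line:
  fixes f :: vfun
  assumes "\<And>p. (\<lambda>t. f (p(i := p i + t *\<^sub>R axis j 1))) differentiable (at 0)"
  shows "((\<lambda>s. f (p(i := p i + s *\<^sub>R axis j 1))) has_real_derivative
           pd f i j (p(i := p i + s0 *\<^sub>R axis j 1))) (at s0)"
proof -
  define p' where "p' = p(i := p i + s0 *\<^sub>R axis j 1)"
  have line: "((\<lambda>t. f (p'(i := p' i + t *\<^sub>R axis j 1))) has_real_derivative pd f i j p') (at 0)"
    unfolding pd_def using assms[of p'] DERIV_deriv_iff_real_differentiable by blast
  have shift: "((\<lambda>s. s - s0) has_real_derivative 1) (at s0)"
    by (auto intro!: derivative_eq_intros)
  have "((\<lambda>s. f (p'(i := p' i + (s - s0) *\<^sub>R axis j 1))) has_real_derivative pd f i j p') (at s0)"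
    using DERIV_chain2[OF _ shift, of "\<lambda>t. f (p'(i := p' i + t *\<^sub>R axis j 1))"] line by simp
  moreover have "p'(i := p' i + (s - s0) *\<^sub>R axis j 1) = p(i := p i + s *\<^sub>R axis j 1)" for s
    by (auto simp: p'_def algebra_simps scaleR_diff_left)
  ultimately show ?thesis by (simp add: p'_def)
qed

lemma has_real_derivative_diagonal:
  fixes H :: "real \<Rightarrow> real \<Rightarrow> real"
  assumes Hx: "((\<lambda>x. H x x0) has_real_derivative Dx) (at x0)"
    and Hy: "\<And>x y. ((\<lambda>y. H x y) has_real_derivative c x y) (at y)"
    and c: "continuous_on UNIV (\<lambda>(x, y). c x y)"
  shows "((\<lambda>x. H x x) has_real_derivative Dx + c x0 x0) (at x0)"
proof -
  have mult_right: "(\<lambda>h. h * d) = (*) d" for d :: real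
    by (auto simp: mult.commute)
  have "((\<lambda>(x, y). H x y) has_derivative
      (\<lambda>(tx, ty). Dx * tx + blinfun_apply (blinfun_scaleR_left (c x0 x0)) ty)) (at (x0, x0) within UNIV \<times> UNIV)"
  proof (rule has_derivative_partialsI[where fx = "(*) Dx" and fy = "\<lambda>x y. blinfun_scaleR_left (c x y)"])
    show "((\<lambda>x. H x x0) has_derivative (*) Dx) (at x0 within UNIV)"
      using Hx by (simp add: has_field_derivative_def)
    show "((\<lambda>y. H x y) has_derivative blinfun_apply (blinfun_scaleR_left (c x y))) (at y within UNIV)"
      if "x \<in> UNIV" "y \<in> UNIV" for x y using Hy[of x y] by (simp add: has_field_derivative_def mult_right)
    show "continuous (at (x0, x0) within UNIV \<times> UNIV) (\<lambda>(x, y). blinfun_scaleR_left (c x y))"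
      using c by (auto intro!: continuous_intros simp: split_beta' continuous_on_eq_continuous_within)
  qed auto
  then have J: "((\<lambda>(x, y). H x y) has_derivative (\<lambda>(tx, ty). Dx * tx + ty * c x0 x0)) (at (x0, x0))"
    by simp
  have diag: "((\<lambda>x. (x, x)) has_derivative (\<lambda>h. (h, h))) (at x0)"
    by (auto intro!: derivative_eq_intros)
  from has_derivative_compose[OF diag J]
  have "((\<lambda>x. H x x) has_derivative (\<lambda>h. h * (Dx + c x0 x0))) (at x0)"
    by (simp add: algebra_simps)
  then show ?thesis by (simp add: has_field_derivative_def mult_right)
qed

text \<open>The chain rule for continuous partial derivatives, adding one coordinate direction at a time.\<close>

lemma coord_path_has_real_derivative:
  fixes f :: vfun
  assumes "finite A"
    and "\<And>i j p. (i, j) \<in> A \<Longrightarrow> (\<lambda>t. f (p(i := p i + t *\<^sub>R axis j 1))) differentiable (at 0)"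
    and "\<And>i j. (i, j) \<in> A \<Longrightarrow> continuous_on UNIV (pd f i j)"
  shows "((\<lambda>x. f (coord_path q v A x)) has_real_derivative
           (\<Sum>(i, j)\<in>A. v i $ j * pd f i j (coord_path q v A x0))) (at x0)"
  using assms
proof (induction A arbitrary: q rule: finite_induct)
  case empty
  then show ?case by simp
next
  case (insert a A)
  obtain i0 j0 where a: "a = (i0, j0)" by (cases a)
  define H where "H x y = f (coord_path (coord_path q v {a} y) v A x)" for x y
  define c where "c x y = v i0 $ j0 * pd f i0 j0 (coord_path (coord_path q v {a} y) v A x)" for x y
  have Hx: "((\<lambda>x. H x x0) has_real_derivative
      (\<Sum>(i, j)\<in>A. v i $ j * pd f i j (coord_path (coord_path q v {a} x0) v A x0))) (at x0)"
    unfolding H_def using insert.prems by (intro insert.IH) auto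
  have Hy: "((\<lambda>y. H x y) has_real_derivative c x y) (at y)" for x y
  proof -
    define P where "P = coord_path q v A x"
    have P: "coord_path (coord_path q v {a} y) v A x = P(i0 := P i0 + (y * v i0 $ j0) *\<^sub>R axis j0 1)" for y
      unfolding P_def by (subst coord_path_commute) (simp add: a coord_path_singleton)
    have line: "((\<lambda>s. f (P(i0 := P i0 + s *\<^sub>R axis j0 1))) has_real_derivative
        pd f i0 j0 (P(i0 := P i0 + (y * v i0 $ j0) *\<^sub>R axis j0 1))) (at (y * v i0 $ j0))"
      by (intro has_real_derivative_coordinate_line insert.prems(1)) (simp add: a)
    have scale: "((\<lambda>y. y * v i0 $ j0) has_real_derivative v i0 $ j0) (at y)"
      by (auto intro!: derivative_eq_intros)
    from DERIV_chain2[OF line scale]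
    show ?thesis
      unfolding H_def c_def P by (simp add: mult.commute)
  qed
  have "continuous_on UNIV (\<lambda>(x, y). pd f i0 j0 (coord_path (coord_path q v {a} y) v A x))"
    using continuous_on_compose2[OF insert.prems(2) continuous_on_coord_path, of i0 j0 q v "{a}" A] a
    by (simp add: split_beta')
  then have "continuous_on UNIV (\<lambda>(x, y). c x y)"
    unfolding c_def by (auto intro!: continuous_intros simp: split_beta')
  from has_real_derivative_diagonal[OF Hx Hy this]
  show ?case
    unfolding H_def c_def coord_path_insert[OF insert.hyps(2)] using insert.hyps a by (simp add: add.commute)
qed

lemma depends_onlyD: "depends_only k f \<Longrightarrow> (\<And>i. i < k \<Longrightarrow> p i = q i) \<Longrightarrow> f p = f q"
  unfolding depends_only_def by blast

lemma depends_only_pd: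
  assumes "depends_only k f"
  shows "depends_only k (pd f i j)"
  unfolding depends_only_def
proof (intro allI impI)
  fix p q :: "nat \<Rightarrow> mom"
  assume "\<forall>l<k. p l = q l"
  then have "\<forall>l<k. (p(i := p i + t *\<^sub>R axis j 1)) l = (q(i := q i + t *\<^sub>R axis j 1)) l" for t
    by simp
  then have "f (p(i := p i + t *\<^sub>R axis j 1)) = f (q(i := q i + t *\<^sub>R axis j 1))" for t
    using assms unfolding depends_only_def by blast
  then show "pd f i j p = pd f i j q"
    unfolding pd_def by simp
qed

lemma continuous_on_UNIV_if_depends_only:
  assumes "depends_only k h" and "continuous_on {p. \<forall>i\<ge>k. p i = 0} h"
  shows "continuous_on UNIV h"
proof -
  define trunc where "trunc p = (\<lambda>i. if i < k then p i else 0)" for p :: "nat \<Rightarrow> mom"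
  have if_zero: "continuous_on S u \<Longrightarrow> continuous_on S (\<lambda>x. if P then u x else (0::mom))"
    for S P and u :: "(nat \<Rightarrow> mom) \<Rightarrow> mom" by (cases P) auto
  have "continuous_on UNIV trunc"
    unfolding trunc_def
    by (intro continuous_on_coordinatewise_then_product if_zero continuous_on_product_coordinates)
  moreover have "trunc ` UNIV \<subseteq> {p. \<forall>i\<ge>k. p i = 0}"
    by (auto simp: trunc_def)
  ultimately have "continuous_on UNIV (h \<circ> trunc)"
    using continuous_on_compose2[OF assms(2)] by (simp add: comp_def)
  moreover have "h \<circ> trunc = h"
    using assms(1) by (auto simp: depends_only_def trunc_def fun_eq_iff)
  ultimately show ?thesis by simp
qed

lemma smooth_in_first_partials:
  assumes "smooth_in k f" and "depends_only k f" and "i < k"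
  shows "(\<lambda>t. f (p(i := p i + t *\<^sub>R axis j 1))) differentiable (at 0)"
    and "continuous_on UNIV (pd f i j)"
proof -
  have "dirs_below k []" "dirs_below k [(i, j)]"
    using assms(3) by (simp_all add: dirs_below_def)
  then have "(\<lambda>t. pdl [] f (p(i := p i + t *\<^sub>R axis j 1))) differentiable (at 0)"
    and "continuous_on {p. \<forall>i\<ge>k. p i = 0} (pdl [(i, j)] f)"
    using assms(1,3) unfolding smooth_in_def by blast+
  then show "(\<lambda>t. f (p(i := p i + t *\<^sub>R axis j 1))) differentiable (at 0)"
    and "continuous_on UNIV (pd f i j)"
    using continuous_on_UNIV_if_depends_only[OF depends_only_pd[OF assms(2)]] by simp_all
qed

lemma ray_has_real_derivative:
  fixes f :: vfun
  assumes "smooth_in k f" and dep: "depends_only k f"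
  shows "((\<lambda>t. f (\<lambda>i. t *\<^sub>R p i)) has_real_derivative
           (\<Sum>i<k. \<Sum>j\<in>UNIV. p i $ j * pd f i j (\<lambda>i. t0 *\<^sub>R p i))) (at t0)"
proof -
  define A where "A = {..<k} \<times> (UNIV :: 4 set)"
  have agree: "coord_path (\<lambda>_. 0) p A t i = t *\<^sub>R p i" if "i < k" for t i
    using that by (simp add: coord_path_def A_def vec_eq_iff)
  have "((\<lambda>t. f (coord_path (\<lambda>_. 0) p A t)) has_real_derivative
      (\<Sum>(i, j)\<in>A. p i $ j * pd f i j (coord_path (\<lambda>_. 0) p A t0))) (at t0)"
    unfolding A_def by (intro coord_path_has_real_derivative smooth_in_first_partials[OF assms]) simp_all
  moreover have "f (coord_path (\<lambda>_. 0) p A t) = f (\<lambda>i. t *\<^sub>R p i)" for t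
    using agree by (intro depends_onlyD[OF dep])
  moreover have "pd f i j (coord_path (\<lambda>_. 0) p A t0) = pd f i j (\<lambda>i. t0 *\<^sub>R p i)" for i j
    using agree by (intro depends_onlyD[OF depends_only_pd[OF dep]])
  ultimately show ?thesis
    by (simp add: A_def sum.cartesian_product)
qed

lemma euler_scaleR: "euler k f (\<lambda>i. t *\<^sub>R p i) = t * (\<Sum>i<k. \<Sum>j\<in>UNIV. p i $ j * pd f i j (\<lambda>i. t *\<^sub>R p i))"
  by (simp add: euler_def sum_distrib_left mult.assoc)

section \<open>The Euler equation along rays\<close>

lemma radial_ode_value_at_1:
  fixes F F' H K :: "real \<Rightarrow> real" and c :: nat
  assumes "c > 0"
    and F: "\<And>t. (F has_real_derivative F' t) (at t)"
    and K: "\<And>t. (K has_real_derivative t ^ (c - 1) * H t) (at t)"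
    and ode: "\<And>t. t * F' t + c * F t = H t"
  shows "F 1 = K 1 - K 0"
proof -
  define D where "D t = t ^ c * F t - K t" for t
  have "(D has_real_derivative t ^ (c - 1) * (c * F t + t * F' t - H t)) (at t)" for t
  proof -
    have "t ^ c = t * t ^ (c - 1)"
      using \<open>c > 0\<close> by (simp add: power_eq_if)
    then show ?thesis
      unfolding D_def[abs_def] by (auto intro!: derivative_eq_intros F K simp: algebra_simps)
  qed
  then have "(D has_real_derivative 0) (at t)" for t
    by (simp add: ode add.commute)
  then have "D 1 = D 0"
    using DERIV_isconst_all by blast
  then show ?thesis
    using \<open>c > 0\<close> by (simp add: D_def zero_power)
qed

lemma scaled_g_has_real_derivative:
  "((\<lambda>t. t\<^sup>2 * g (t *\<^sub>R P)) has_real_derivative 2 * t * Cov (t *\<^sub>R P)) (at t)"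
proof -
  have "t\<^sup>2 * g (t *\<^sub>R P) = (if P \<bullet> P = 0 then t\<^sup>2 else (1 - exp (- (t\<^sup>2 * (P \<bullet> P)))) / (P \<bullet> P))" for t
    by (auto simp: g_def power2_eq_square field_simps)
  then show ?thesis
    unfolding Cov_def by (cases "P \<bullet> P = 0") (auto intro!: derivative_eq_intros simp: power2_eq_square)
qed

lemma avg_scaleR:
  assumes "\<And>t q. P (\<lambda>i. t *\<^sub>R q i) = t *\<^sub>R P q"
  shows "avg k (\<lambda>q. h (P q)) (\<lambda>i. t *\<^sub>R p i) = (\<Sum>\<sigma> | \<sigma> permutes {..<k}. h (t *\<^sub>R P (p \<circ> \<sigma>))) / fact k"
  unfolding avg_def using assms[of t] by (simp add: comp_def)

lemma euler_equation_solution: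
  fixes f :: vfun and P :: "(nat \<Rightarrow> mom) \<Rightarrow> mom"
  assumes "smooth_in k f" and "depends_only k f"
    and P: "\<And>t q. P (\<lambda>i. t *\<^sub>R q i) = t *\<^sub>R P q"
    and eq: "\<And>p. euler k f p + 2 * f p = 2 * a * avg k (\<lambda>q. Cov (P q)) p"
  shows "f p = a * avg k (\<lambda>q. g (P q)) p"
proof -
  define S where "S = {\<sigma>. \<sigma> permutes {..<k}}"
  define F' where "F' t = (\<Sum>i<k. \<Sum>j\<in>UNIV. p i $ j * pd f i j (\<lambda>i. t *\<^sub>R p i))" for t
  define H where "H t = 2 * a * avg k (\<lambda>q. Cov (P q)) (\<lambda>i. t *\<^sub>R p i)" for t
  define K where "K t = a * (\<Sum>\<sigma>\<in>S. t\<^sup>2 * g (t *\<^sub>R P (p \<circ> \<sigma>))) / fact k" for t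
  have "f (\<lambda>i. 1 *\<^sub>R p i) = K 1 - K 0"
  proof (rule radial_ode_value_at_1[where c = 2 and H = H])
    show "((\<lambda>t. f (\<lambda>i. t *\<^sub>R p i)) has_real_derivative F' t) (at t)" for t
      unfolding F'_def by (rule ray_has_real_derivative[OF assms(1,2)])
    show "(K has_real_derivative t ^ (2 - 1) * H t) (at t)" for t
    proof -
      have "(K has_real_derivative a * (\<Sum>\<sigma>\<in>S. 2 * t * Cov (t *\<^sub>R P (p \<circ> \<sigma>))) / fact k) (at t)"
        unfolding K_def[abs_def] by (intro DERIV_cdivide DERIV_cmult DERIV_sum scaled_g_has_real_derivative)
      then show ?thesis
        by (simp add: H_def avg_scaleR[OF P, where h = Cov] S_def sum_distrib_left sum_divide_distrib mult_ac comp_def)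
    qed
    show "t * F' t + real 2 * f (\<lambda>i. t *\<^sub>R p i) = H t" for t
      using eq[of "\<lambda>i. t *\<^sub>R p i"] by (simp add: euler_scaleR F'_def H_def)
  qed simp
  then show ?thesis
    by (simp add: K_def avg_def S_def)
qed

section \<open>Gaussian integrals\<close>

lemma nn_integral_gaussian:
  fixes a :: real
  assumes "a > 0"
  shows "(\<integral>\<^sup>+x. ennreal (exp (- (a * x\<^sup>2))) \<partial>lborel) = ennreal (sqrt (pi / a))"
proof -
  define s where "s = sqrt (1 / (2 * a))"
  have s: "s > 0" "s\<^sup>2 = 1 / (2 * a)"
    using assms by (simp_all add: s_def)
  have density: "exp (- (a * x\<^sup>2)) = sqrt (pi / a) * normal_density 0 s x" for x
  proof -
    have "sqrt (2 * pi * s\<^sup>2) = sqrt (pi / a)" "- ((x - 0)\<^sup>2) / (2 * s\<^sup>2) = - (a * x\<^sup>2)"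
      using assms by (simp_all add: s field_simps)
    then show ?thesis
      using assms by (simp add: normal_density_def)
  qed
  have "(\<integral>\<^sup>+x. ennreal (normal_density 0 s x) \<partial>lborel) = 1"
    using s by (subst nn_integral_eq_integral) auto
  then show ?thesis
    unfolding density using assms
    by (simp add: ennreal_mult nn_integral_cmult)
qed

lemma nn_integral_gaussian_euclidean:
  fixes a :: real
  assumes "a > 0"
  shows "(\<integral>\<^sup>+x. ennreal (exp (- (a * (x \<bullet> x)))) \<partial>(lborel :: 'a::euclidean_space measure))
           = ennreal (sqrt (pi / a) ^ DIM('a))"
proof -
  have product: "ennreal (exp (- (a * (x \<bullet> x)))) = (\<Prod>b\<in>Basis. ennreal (exp (- (a * (x \<bullet> b)\<^sup>2))))"
    for x :: 'a
  proof -
    have "x \<bullet> x = (\<Sum>b\<in>Basis. (x \<bullet> b)\<^sup>2)"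
      by (subst euclidean_inner) (simp add: power2_eq_square)
    then show ?thesis
      by (simp add: sum_distrib_left exp_sum[symmetric] sum_negf prod_ennreal)
  qed
  have "(\<integral>\<^sup>+x. ennreal (exp (- (a * (x \<bullet> x)))) \<partial>(lborel :: 'a measure))
      = (\<integral>\<^sup>+x. (\<Prod>b\<in>Basis. ennreal (exp (- (a * (x \<bullet> b)\<^sup>2)))) \<partial>(lborel :: 'a measure))"
    by (simp only: product)
  also have "\<dots> = (\<Prod>b\<in>(Basis :: 'a set). \<integral>\<^sup>+x. ennreal (exp (- (a * x\<^sup>2))) \<partial>lborel)"
    by (rule nn_integral_lborel_prod) auto
  also have "\<dots> = ennreal (sqrt (pi / a) ^ DIM('a))"
    using assms by (simp add: nn_integral_gaussian ennreal_power)
  finally show ?thesis .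
qed

lemma nn_integral_gaussian_mom:
  assumes "a > 0"
  shows "(\<integral>\<^sup>+q. ennreal (exp (- (a * (q \<bullet> q)))) \<partial>(lborel :: mom measure)) = ennreal ((pi / a)\<^sup>2)"
proof -
  have "sqrt (pi / a) ^ 4 = (sqrt (pi / a) ^ 2) ^ 2"
    by simp
  also have "\<dots> = (pi / a)\<^sup>2"
    using assms by simp
  finally have "sqrt (pi / a) ^ 4 = (pi / a)\<^sup>2" .
  then show ?thesis
    using nn_integral_gaussian_euclidean[OF assms, where 'a = mom] by simp
qed

lemma borel_measurable_Cov [measurable]: "Cov \<in> borel_measurable borel"
  unfolding Cov_def by measurable

lemma has_bochner_integral_Cov: "has_bochner_integral lborel Cov (pi\<^sup>2)"
proof -
  have "(\<integral>\<^sup>+q. ennreal (Cov q) \<partial>lborel) = ennreal (pi\<^sup>2)"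
    using nn_integral_gaussian_mom[of 1] by (simp add: Cov_def)
  then show ?thesis
    unfolding has_bochner_integral_iff
    by (subst nn_integral_eq_integrable[symmetric]) (auto simp: Cov_def)
qed

lemma Cov_mult_g_eq_nn_integral:
  "ennreal (Cov q * g q) = (\<integral>\<^sup>+s. ennreal (exp (- ((1 + s) * (q \<bullet> q)))) * indicator {0..1} s \<partial>lborel)"
proof (cases "q \<bullet> q = 0")
  case True
  have "(\<integral>\<^sup>+s. ennreal (exp (- ((1 + s) * (q \<bullet> q)))) * indicator {0..1} s \<partial>lborel) = ennreal (1 - 0)"
    by (rule nn_integral_FTC_Icc[where F = "\<lambda>s. s"]) (auto simp: True intro!: derivative_eq_intros)
  then show ?thesis by (simp add: True Cov_def g_def)
next
  case False
  define a where "a = q \<bullet> q"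
  have "a > 0"
    using False by (simp add: a_def order_less_le)
  have "(\<integral>\<^sup>+s. ennreal (exp (- ((1 + s) * a))) * indicator {0..1} s \<partial>lborel)
      = ennreal (- exp (- ((1 + 1) * a)) / a - (- exp (- ((1 + 0) * a)) / a))"
    by (rule nn_integral_FTC_Icc[where F = "\<lambda>s. - exp (- ((1 + s) * a)) / a"])
       (use \<open>a > 0\<close> in \<open>auto intro!: derivative_eq_intros simp: field_simps\<close>)
  also have "- exp (- ((1 + 1) * a)) / a - (- exp (- ((1 + 0) * a)) / a) = Cov q * g q"
    using \<open>a > 0\<close> False
    by (simp add: Cov_def g_def a_def[symmetric] field_simps flip: exp_add)
  finally show ?thesis by (simp add: a_def)
qed

lemma has_bochner_integral_Cov_mult_g: "has_bochner_integral lborel (\<lambda>q. Cov q * g q) (pi\<^sup>2 / 2)"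
proof -
  have "(\<integral>\<^sup>+q. ennreal (Cov q * g q) \<partial>lborel)
      = (\<integral>\<^sup>+q. \<integral>\<^sup>+s. ennreal (exp (- ((1 + s) * (q \<bullet> q)))) * indicator {0..1} s \<partial>lborel \<partial>(lborel :: mom measure))"
    by (simp add: Cov_mult_g_eq_nn_integral)
  also have "\<dots> = (\<integral>\<^sup>+s. \<integral>\<^sup>+q. ennreal (exp (- ((1 + s) * (q \<bullet> q)))) * indicator {0..1} s \<partial>(lborel :: mom measure) \<partial>lborel)"
    by (rule lborel_pair.Fubini') measurable
  also have "\<dots> = (\<integral>\<^sup>+s. ennreal ((pi / (1 + s))\<^sup>2) * indicator {0..1} s \<partial>lborel)"
    by (intro nn_integral_cong) (auto simp: nn_integral_multc nn_integral_gaussian_mom split: split_indicator)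
  also have "\<dots> = ennreal (- (pi\<^sup>2 / (1 + 1)) - (- (pi\<^sup>2 / (1 + 0))))"
    by (rule nn_integral_FTC_Icc[where F = "\<lambda>s. - (pi\<^sup>2 / (1 + s))"])
       (auto intro!: derivative_eq_intros simp: field_simps power2_eq_square)
  finally have "(\<integral>\<^sup>+q. ennreal (Cov q * g q) \<partial>lborel) = ennreal (pi\<^sup>2 / 2)"
    by simp
  then show ?thesis
    unfolding has_bochner_integral_iff
    by (subst nn_integral_eq_integrable[symmetric]) (auto simp: Cov_def g_def intro!: divide_nonneg_pos)
qed

section \<open>Low orders of the flow equation\<close>

lemma system_S_equation:
  assumes "system_S V beta" and "1 \<le> r" and "1 \<le> n"
  shows "euler (2 * n - 1) (V r n) p + (- 4 + 2 * real n + real r * beta 1) * V r n p = flow_rhs V beta r n p"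
  using assms unfolding system_S_def by blast

lemma euler_at_zero [simp]: "euler k f (\<lambda>_. 0) = 0"
  by (simp add: euler_def)

lemma avg_at_zero: "avg k F (\<lambda>_. 0) = F (\<lambda>_. 0)"
  using card_permutations[of "{..<k}" k] by (simp add: avg_def comp_def)

lemma beta_1_eq_0:
  assumes S: "system_S V beta"
    and V12: "\<forall>p. V 1 2 p = 1" and V1n: "\<forall>n p. n > 2 \<longrightarrow> V 1 n p = 0"
  shows "beta 1 = 0"
proof -
  have "V 1 2 = (\<lambda>_. 1)"
    using V12 by auto
  moreover have "flow_rhs V beta 1 2 p = 0" for p
    unfolding flow_rhs_def using V1n by simp
  ultimately show ?thesis
    using system_S_equation[OF S, of 1 2 "\<lambda>_. 0"] by simp
qed

lemma euler_equation_V23: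
  assumes S: "system_S V beta"
    and V12: "\<forall>p. V 1 2 p = 1" and V1n: "\<forall>n p. n > 2 \<longrightarrow> V 1 n p = 0"
    and V24: "\<forall>p. V 2 4 p = 0"
  shows "euler 5 (V 2 3) p + 2 * V 2 3 p = 2 * (- 20) * avg 5 (\<lambda>q. Cov (q 0 + q 1 + q 2)) p"
proof -
  have V1: "V (Suc 0) n p = (if n = 2 then 1 else 0)" if "n \<ge> 2" for n p
    using V12 V1n that by auto
  have "{1..3::nat} = {1, 2, 3}" "(6::nat) choose 3 = 20"
    by (auto simp: eval_nat_numeral)
  then have "flow_rhs V beta 2 3 p = - 40 * avg 5 (\<lambda>q. Cov (q 0 + q 1 + q 2)) p"
    unfolding flow_rhs_def using V24
    by (simp add: V1 avg_def eval_nat_numeral add.assoc)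
  then show ?thesis
    using system_S_equation[OF S, of 2 3 p] beta_1_eq_0[OF S V12 V1n] by simp
qed

lemma mu_1_eq:
  assumes S: "system_S V beta" and V12: "\<forall>p. V 1 2 p = 1" and beta1: "beta 1 = 0"
    and V11: "\<forall>p. V 1 1 p = mu + zeta * (p 0 \<bullet> p 0)"
  shows "mu = - 1 / (32 * pi\<^sup>2)"
proof -
  have "V (Suc 0) (Suc (Suc 0)) p = 1" for p
    using V12 by (simp add: numeral_2_eq_2)
  then have "flow_rhs V beta 1 1 (\<lambda>_. 0) = pi\<^sup>2 / (2 * pi) ^ 4"
    unfolding flow_rhs_def using has_bochner_integral_integral_eq[OF has_bochner_integral_Cov] by simp
  then have "- 2 * mu = pi\<^sup>2 / (2 * pi) ^ 4"
    using system_S_equation[OF S, of 1 1 "\<lambda>_. 0"] beta1 V11 by simp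
  then show ?thesis
    by (simp add: field_simps eval_nat_numeral)
qed

lemma sum_permutes_5:
  "(\<Sum>\<sigma> | \<sigma> permutes {..<5::nat}. f \<sigma>) =
   (\<Sum>a\<in>{4,3,2,1,0}. \<Sum>b\<in>{3,2,1,0}. \<Sum>c\<in>{2,1,0}. \<Sum>d\<in>{1,0}. \<Sum>e\<in>{0}.
      f (Transposition.transpose 4 a \<circ> (Transposition.transpose 3 b \<circ> (Transposition.transpose 2 c \<circ>
        (Transposition.transpose 1 d \<circ> (Transposition.transpose 0 e \<circ> id))))))"
proof -
  have "{..<5::nat} = {4, 3, 2, 1, 0}"
    by auto
  then show ?thesis
    by (simp add: sum_over_permutations_insert)
qed

lemma avg_g_at_opposite_pair:
  "avg 5 (\<lambda>p. g (p 0 + p 1 + p 2)) (\<lambda>i. if i = 3 then q else if i = 4 then - q else 0) = (4 + 6 * g q) / 10"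
proof -
  have "g (- q) = g q" "g 0 = 1"
    by (simp_all add: g_def)
  then show ?thesis
    unfolding avg_def sum_permutes_5 by (simp add: Transposition.transpose_def fact_numeral)
qed

lemma beta_2_eq:
  assumes S: "system_S V beta" and V12: "\<forall>p. V 1 2 p = 1" and beta1: "beta 1 = 0"
    and V11: "\<forall>p. V 1 1 p = mu + zeta * (p 0 \<bullet> p 0)" and mu: "mu = - 1 / (32 * pi\<^sup>2)"
    and V23: "\<forall>q. V 2 3 (\<lambda>i. if i = 3 then q else if i = 4 then - q else 0) = - 8 - 12 * g q"
  shows "beta 2 = - 6 / (4 * pi)\<^sup>2"
proof -
  have V_pair: "V 2 (2 + 1) (\<lambda>i. if i < 2 * 2 - 1 then 0 else if i = 2 * 2 - 1 then q else if i = 2 * 2 then - q else 0)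
      = - 8 - 12 * g q" for q
  proof -
    have "(\<lambda>i::nat. if i < 2 * 2 - 1 then 0 else if i = 2 * 2 - 1 then q else if i = 2 * 2 then - q else 0)
        = (\<lambda>i. if i = 3 then q else if i = 4 then - q else 0)"
      by (auto simp: fun_eq_iff)
    then show ?thesis
      using V23 by (simp add: numeral_3_eq_3)
  qed
  have "has_bochner_integral lborel (\<lambda>q. - 8 * Cov q - 12 * (Cov q * g q)) (- 8 * pi\<^sup>2 - 12 * (pi\<^sup>2 / 2))"
    by (intro has_bochner_integral_diff has_bochner_integral_mult_right
        has_bochner_integral_Cov has_bochner_integral_Cov_mult_g)
  then have "has_bochner_integral lborel
      (\<lambda>q. Cov q * V 2 (2 + 1) (\<lambda>i. if i < 2 * 2 - 1 then 0 else if i = 2 * 2 - 1 then q else if i = 2 * 2 then - q else 0))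
      (- 14 * pi\<^sup>2)"
    unfolding V_pair by (simp add: algebra_simps)
  note integral = has_bochner_integral_integral_eq[OF this]
  have "V (Suc 0) (Suc 0) p = mu + zeta * (p 0 \<bullet> p 0)" "V (Suc 0) 2 p = 1" "V (Suc 0) (Suc (Suc 0)) p = 1"
    for p using V11 V12 by (simp_all add: numeral_2_eq_2)
  moreover have "{1..1::nat} = {1}" "{2..2::nat} = {2}" "{1..2::nat} = {1, 2}" "(4::nat) choose 3 = 4"
    by (auto simp: eval_nat_numeral)
  ultimately have "flow_rhs V beta 2 2 (\<lambda>_. 0) = - beta 2 - 14 * pi\<^sup>2 / (2 * pi) ^ 4 - 16 * mu"
    unfolding flow_rhs_def integral by (simp add: avg_at_zero Cov_def)
  then have "beta 2 = - 14 * pi\<^sup>2 / (2 * pi) ^ 4 - 16 * mu"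
    using system_S_equation[OF S, of 2 2 "\<lambda>_. 0"] beta1 by simp
  then show ?thesis
    unfolding mu by (simp add: field_simps eval_nat_numeral)
qed

lemma props_I_VII_vertex:
  assumes "props_I_VII V lam" and "1 \<le> r" and "1 \<le> n"
  shows "depends_only (2 * n - 1) (V r n)" and "smooth_in (2 * n - 1) (V r n)"
    and "n > r + 1 \<Longrightarrow> V r n p = 0"
  using assms unfolding props_I_VII_def by blast+

theorem mainTheorem8:
  fixes V :: "nat \<Rightarrow> nat \<Rightarrow> (nat \<Rightarrow> real^4) \<Rightarrow> real"
    and beta lam :: "nat \<Rightarrow> real"
  assumes "system_S V beta"
    and "props_I_VII V lam"
  shows "(\<forall>p. V 2 3 p = - 20 * avg 5 (\<lambda>p. g (p 0 + p 1 + p 2)) p)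
       \<and> (\<forall>q. V 2 3 (\<lambda>i. if i = 3 then q else if i = 4 then - q else 0) = - 8 - 12 * g q)
       \<and> beta 2 = - 6 / (4 * pi)^2"
proof -
  note props = assms(2)[unfolded props_I_VII_def]
  obtain mu zeta where V11: "\<forall>p. V 1 1 p = mu + zeta * (p 0 \<bullet> p 0)"
    using props by (elim conjE exE)
  have V12: "\<forall>p. V 1 2 p = 1"
    using props by (elim conjE)
  have V1n: "\<forall>n p. n > 2 \<longrightarrow> V 1 n p = 0"
    using props by (elim conjE)
  have V23_props: "depends_only 5 (V 2 3)" "smooth_in 5 (V 2 3)"
    using props_I_VII_vertex(1,2)[OF assms(2), of 2 3] by simp_all
  have V24: "\<forall>p. V 2 4 p = 0"
    using props_I_VII_vertex(3)[OF assms(2), of 2 4] by simp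
  have V23: "\<forall>p. V 2 3 p = - 20 * avg 5 (\<lambda>p. g (p 0 + p 1 + p 2)) p"
  proof
    fix p
    show "V 2 3 p = - 20 * avg 5 (\<lambda>p. g (p 0 + p 1 + p 2)) p"
      by (rule euler_equation_solution[OF V23_props(2,1)])
         (simp_all add: scaleR_add_right euler_equation_V23[OF assms(1) V12 V1n V24])
  qed
  have V23_pair: "\<forall>q. V 2 3 (\<lambda>i. if i = 3 then q else if i = 4 then - q else 0) = - 8 - 12 * g q"
    unfolding V23[rule_format] avg_g_at_opposite_pair by simp
  have beta1: "beta 1 = 0"
    by (rule beta_1_eq_0[OF assms(1) V12 V1n])
  show ?thesis
    using V23 V23_pair beta_2_eq[OF assms(1) V12 beta1 V11 mu_1_eq[OF assms(1) V12 beta1 V11] V23_pair]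
    by blast
qed

end
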